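(* In the $m$-type setting described in the context: (1) if $x_i>1$ for every type $i$, then diffusion occurs from a small seed; (2) if $x_i\le1$ for every type $i$, then diffusion does not occur from a small seed; (3) if there is some type $i$ with $\pi_{ii}x_i>1$, then diffusion occurs from a small seed; (4) if there is a nonempty subset of types $S\subseteq\{1,\dots,m\}$ such that $\sum_{j\in S}\pi_{ij}x_j>1$ for each $i\in S$, then diffusion occurs from a small seed.
   Context: There are $m\ge1$ types. $\Pi=(\pi_{ij})$ is a nonnegative row-stochastic primitive $m\times m$ matrix ($\pi_{ij}$ is the probability that a meeting of a type-$i$ agent is with a type-$j$ agent). For each type $i$: $P_i$ is a degree distribution on the nonnegative integers; $w_i(d)>0$ are degree weights; $f_i(d,a)$, $g_i(d,a)$ ($0\le a\le d$) are adoption and abandonment rates satisfying: $f_i(d,0)=0$; $f_i(d,a)$ nondecreasing in $a$; $f_i(d,1)>0$ for some $d$ with $P_i(d)>0$; $g_i(d,0)>0$; $g_i(d,a)$ nonincreasing in $a$. Let $x_i=\sum_dP_i(d)w_i(d)\,d\,\frac{f_i(d,1)}{g_i(d,0)}$, assumed finite; it is positive. $A$ is the $m\times m$ matrix with $A_{ij}=\pi_{ij}x_j$. Diffusion occurs from a small seed means: for every $\varepsilon>0$ there exists $v\in\mathbb{R}^m$ with $0<v_i<\varepsilon$ and $(Av)_i>v_i$ for all $i$. (The condition $x_i>1$ corresponds to diffusion within type $i$ when isolated.) *)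

theory Defs
  imports "HOL-Analysis.Analysis"
begin

text \<open>Types are indexed by 0,...,m-1. Square m x m matrices are functions nat => nat => real,
  only entries with indices < m are relevant.\<close>

definition mat_mult :: "nat \<Rightarrow> (nat \<Rightarrow> nat \<Rightarrow> real) \<Rightarrow> (nat \<Rightarrow> nat \<Rightarrow> real) \<Rightarrow> (nat \<Rightarrow> nat \<Rightarrow> real)" where
  "mat_mult m M N = (\<lambda>i j. \<Sum>k<m. M i k * N k j)"

fun mat_pow :: "nat \<Rightarrow> (nat \<Rightarrow> nat \<Rightarrow> real) \<Rightarrow> nat \<Rightarrow> (nat \<Rightarrow> nat \<Rightarrow> real)" where
  "mat_pow m M 0 = (\<lambda>i j. if i = j then 1 else 0)"
| "mat_pow m M (Suc n) = mat_mult m (mat_pow m M n) M"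

definition row_stochastic :: "nat \<Rightarrow> (nat \<Rightarrow> nat \<Rightarrow> real) \<Rightarrow> bool" where
  "row_stochastic m M \<longleftrightarrow> (\<forall>i<m. \<forall>j<m. M i j \<ge> 0) \<and> (\<forall>i<m. (\<Sum>j<m. M i j) = 1)"

definition primitive :: "nat \<Rightarrow> (nat \<Rightarrow> nat \<Rightarrow> real) \<Rightarrow> bool" where
  "primitive m M \<longleftrightarrow> (\<forall>i<m. \<forall>j<m. M i j \<ge> 0) \<and> (\<exists>k. \<forall>i<m. \<forall>j<m. mat_pow m M k i j > 0)"

definition degree_distribution :: "(nat \<Rightarrow> real) \<Rightarrow> bool" where
  "degree_distribution p \<longleftrightarrow> (\<forall>d. p d \<ge> 0) \<and> p sums 1"

text \<open>Conditions on adoption rates f(d,a) and abandonment rates g(d,a), 0 <= a <= d, for one type.\<close>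
definition rate_conditions :: "(nat \<Rightarrow> real) \<Rightarrow> (nat \<Rightarrow> nat \<Rightarrow> real) \<Rightarrow> (nat \<Rightarrow> nat \<Rightarrow> real) \<Rightarrow> bool" where
  "rate_conditions p f g \<longleftrightarrow>
     (\<forall>d. f d 0 = 0)
   \<and> (\<forall>d a b. a \<le> b \<and> b \<le> d \<longrightarrow> f d a \<le> f d b)
   \<and> (\<exists>d. 1 \<le> d \<and> p d > 0 \<and> f d 1 > 0)
   \<and> (\<forall>d. g d 0 > 0)
   \<and> (\<forall>d a b. a \<le> b \<and> b \<le> d \<longrightarrow> g d b \<le> g d a)"

definition x_term :: "(nat \<Rightarrow> real) \<Rightarrow> (nat \<Rightarrow> real) \<Rightarrow> (nat \<Rightarrow> nat \<Rightarrow> real) \<Rightarrow> (nat \<Rightarrow> nat \<Rightarrow> real) \<Rightarrow> nat \<Rightarrow> real" where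
  "x_term p w f g d = p d * w d * real d * f d 1 / g d 0"

definition xval :: "(nat \<Rightarrow> real) \<Rightarrow> (nat \<Rightarrow> real) \<Rightarrow> (nat \<Rightarrow> nat \<Rightarrow> real) \<Rightarrow> (nat \<Rightarrow> nat \<Rightarrow> real) \<Rightarrow> real" where
  "xval p w f g = (\<Sum>d. x_term p w f g d)"

definition diffusion_small_seed :: "nat \<Rightarrow> (nat \<Rightarrow> nat \<Rightarrow> real) \<Rightarrow> bool" where
  "diffusion_small_seed m A \<longleftrightarrow>
     (\<forall>\<epsilon>>0. \<exists>v :: nat \<Rightarrow> real. \<forall>i<m. 0 < v i \<and> v i < \<epsilon> \<and> (\<Sum>j<m. A i j * v j) > v i)"

end

theory Submission
  imports Defs
begin

text \<open>
  Since every x_j is positive, A is a nonnegative matrix with the same positive entries as Pi, so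
  some power A^k is positive. For (4), let u be the indicator vector of S: then u <= A u, strictly
  on S, so the iterates A^n u increase and A^k u > 0. Hence v = u + A u + ... + A^k u satisfies
  A v - v = A^(k+1) u - u > 0, and scaled-down copies of v are the required small seeds.
  (1) is the case S = {..<m}, using that Pi is stochastic, and (3) is the case S = {i}.
  For (2), the rows of A sum to at most 1, so at a maximal coordinate i of a positive v
  we get (A v)_i <= v_i.
\<close>

definition mat_vec :: "nat \<Rightarrow> (nat \<Rightarrow> nat \<Rightarrow> real) \<Rightarrow> (nat \<Rightarrow> real) \<Rightarrow> nat \<Rightarrow> real" where
  "mat_vec m M u = (\<lambda>i. \<Sum>j<m. M i j * u j)"

definition nonneg_mat :: "nat \<Rightarrow> (nat \<Rightarrow> nat \<Rightarrow> real) \<Rightarrow> bool" where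
  "nonneg_mat m M \<longleftrightarrow> (\<forall>i<m. \<forall>j<m. M i j \<ge> 0)"

lemma mat_vec_mat_mult: "mat_vec m (mat_mult m M N) u i = mat_vec m M (mat_vec m N u) i"
proof -
  have "mat_vec m (mat_mult m M N) u i = (\<Sum>j<m. \<Sum>k<m. M i k * N k j * u j)"
    by (simp add: mat_vec_def mat_mult_def sum_distrib_right)
  also have "\<dots> = (\<Sum>k<m. \<Sum>j<m. M i k * (N k j * u j))"
    by (subst sum.swap) (simp add: mult.assoc)
  also have "\<dots> = mat_vec m M (mat_vec m N u) i"
    by (simp add: mat_vec_def sum_distrib_left)
  finally show ?thesis .
qed

lemma funpow_mat_vec: "i < m \<Longrightarrow> (mat_vec m M ^^ n) u i = mat_vec m (mat_pow m M n) u i"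
proof (induction n arbitrary: u)
  case 0
  have "mat_vec m (mat_pow m M 0) u i = (\<Sum>j<m. if i = j then u j else 0)"
    unfolding mat_vec_def mat_pow.simps by (rule sum.cong) auto
  with 0 show ?case by simp
next
  case (Suc n)
  have "(mat_vec m M ^^ Suc n) u i = (mat_vec m M ^^ n) (mat_vec m M u) i"
    by (simp add: funpow_Suc_right del: funpow.simps)
  with Suc show ?case by (simp add: mat_vec_mat_mult)
qed

lemma mat_vec_mono:
  "nonneg_mat m M \<Longrightarrow> (\<And>j. j < m \<Longrightarrow> u j \<le> u' j) \<Longrightarrow> i < m \<Longrightarrow> mat_vec m M u i \<le> mat_vec m M u' i"
  unfolding mat_vec_def nonneg_mat_def by (auto intro!: sum_mono mult_left_mono)

lemma mat_vec_sum: "mat_vec m M (\<lambda>i. \<Sum>n\<in>N. F n i) i = (\<Sum>n\<in>N. mat_vec m M (F n) i)"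
  unfolding mat_vec_def by (simp add: sum_distrib_left sum.swap[of _ N])

lemma nonneg_mat_pow: "nonneg_mat m M \<Longrightarrow> nonneg_mat m (mat_pow m M n)"
  by (induction n) (auto simp: nonneg_mat_def mat_mult_def intro!: sum_nonneg)

lemma mat_pow_pos_if_pos_imp_pos:
  assumes M: "nonneg_mat m M" and N: "nonneg_mat m N"
    and pos: "\<And>i j. i < m \<Longrightarrow> j < m \<Longrightarrow> M i j > 0 \<Longrightarrow> N i j > 0"
    and "i < m" "j < m" "mat_pow m M n i j > 0"
  shows "mat_pow m N n i j > 0"
  using assms(5-)
proof (induction n arbitrary: j)
  case 0
  then show ?case by simp
next
  case (Suc n)
  then have "(\<Sum>l<m. mat_pow m M n i l * M l j) \<noteq> 0"
    by (simp add: mat_mult_def)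
  then obtain l where l: "l < m" "mat_pow m M n i l * M l j \<noteq> 0"
    by (meson lessThan_iff sum.not_neutral_contains_not_neutral)
  moreover have "mat_pow m M n i l \<ge> 0" "M l j \<ge> 0"
    using nonneg_mat_pow[OF M] M \<open>i < m\<close> \<open>j < m\<close> l(1) by (auto simp: nonneg_mat_def)
  ultimately have "mat_pow m N n i l * N l j > 0"
    using Suc pos by (simp add: less_le)
  moreover have "\<forall>l'<m. mat_pow m N n i l' * N l' j \<ge> 0"
    using nonneg_mat_pow[OF N] N \<open>i < m\<close> \<open>j < m\<close> by (auto simp: nonneg_mat_def)
  ultimately show ?case
    using l(1) by (auto simp: mat_mult_def intro!: sum_pos2)
qed

lemma primitive_scale_columns:
  assumes "primitive m M" and x: "\<forall>j<m. x j > 0"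
  shows "primitive m (\<lambda>i j. M i j * x j)"
proof -
  have M: "nonneg_mat m M" and N: "nonneg_mat m (\<lambda>i j. M i j * x j)"
    using assms by (auto simp: primitive_def nonneg_mat_def less_imp_le)
  obtain k where "\<forall>i<m. \<forall>j<m. mat_pow m M k i j > 0"
    using \<open>primitive m M\<close> unfolding primitive_def by blast
  then have "\<forall>i<m. \<forall>j<m. mat_pow m (\<lambda>i j. M i j * x j) k i j > 0"
    using mat_pow_pos_if_pos_imp_pos[OF M N] x by simp
  with N show ?thesis
    unfolding primitive_def nonneg_mat_def by blast
qed

lemma diffusion_small_seedI:
  assumes v: "\<forall>i<m. 0 < v i \<and> v i < mat_vec m A v i"
  shows "diffusion_small_seed m A"
  unfolding diffusion_small_seed_def
proof (intro allI impI)
  fix \<epsilon> :: real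
  assume "\<epsilon> > 0"
  define s where "s = 1 + (\<Sum>i<m. v i)"
  have v_less_s: "v i < s" if "i < m" for i
  proof -
    have "v i \<le> (\<Sum>i<m. v i)"
      by (rule member_le_sum) (use v that in \<open>auto intro: less_imp_le\<close>)
    then show ?thesis by (simp add: s_def)
  qed
  have "(\<Sum>i<m. v i) \<ge> 0"
    using v by (intro sum_nonneg) (simp add: less_imp_le)
  then have "s > 0"
    by (simp add: s_def)
  show "\<exists>v'. \<forall>i<m. 0 < v' i \<and> v' i < \<epsilon> \<and> (\<Sum>j<m. A i j * v' j) > v' i"
  proof (intro exI[of _ "\<lambda>j. \<epsilon> / s * v j"] allI impI conjI)
    fix i
    assume i: "i < m"
    show "0 < \<epsilon> / s * v i"
      using \<open>\<epsilon> > 0\<close> \<open>s > 0\<close> v i by simp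
    show "\<epsilon> / s * v i < \<epsilon>"
      using \<open>\<epsilon> > 0\<close> \<open>s > 0\<close> v_less_s[OF i] by (simp add: field_simps)
    have "(\<Sum>j<m. A i j * (\<epsilon> / s * v j)) = \<epsilon> / s * mat_vec m A v i"
      by (simp add: mat_vec_def sum_distrib_left algebra_simps)
    then show "(\<Sum>j<m. A i j * (\<epsilon> / s * v j)) > \<epsilon> / s * v i"
      using \<open>\<epsilon> > 0\<close> \<open>s > 0\<close> v i mult_strict_left_mono[of "v i" "mat_vec m A v i" "\<epsilon> / s"]
      by simp
  qed
qed

lemma mat_vec_iterates_mono:
  assumes "nonneg_mat m A" and sub: "\<And>i. i < m \<Longrightarrow> u i \<le> mat_vec m A u i"
    and "i < m" "n \<le> n'"
  shows "(mat_vec m A ^^ n) u i \<le> (mat_vec m A ^^ n') u i"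
proof -
  have step: "\<forall>i<m. (mat_vec m A ^^ n) u i \<le> (mat_vec m A ^^ Suc n) u i" for n
  proof (induction n)
    case 0
    then show ?case using sub by simp
  next
    case (Suc n)
    then show ?case
      using mat_vec_mono[OF \<open>nonneg_mat m A\<close>] by simp
  qed
  show ?thesis
    using lift_Suc_mono_le[of "\<lambda>n. (mat_vec m A ^^ n) u i"] step assms(3,4) by blast
qed

lemma mat_vec_sum_iterates_telescope:
  "mat_vec m A (\<lambda>i. \<Sum>n<N. (mat_vec m A ^^ n) u i) i - (\<Sum>n<N. (mat_vec m A ^^ n) u i)
     = (mat_vec m A ^^ N) u i - u i"
proof -
  have "mat_vec m A (\<lambda>i. \<Sum>n<N. (mat_vec m A ^^ n) u i) i = (\<Sum>n<N. (mat_vec m A ^^ Suc n) u i)"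
    by (subst mat_vec_sum) simp
  then have "mat_vec m A (\<lambda>i. \<Sum>n<N. (mat_vec m A ^^ n) u i) i - (\<Sum>n<N. (mat_vec m A ^^ n) u i)
      = (\<Sum>n<N. (mat_vec m A ^^ Suc n) u i - (mat_vec m A ^^ n) u i)"
    by (simp only: sum_subtractf)
  also have "\<dots> = (mat_vec m A ^^ N) u i - u i"
    using sum_lessThan_telescope[of "\<lambda>n. (mat_vec m A ^^ n) u i" N] by simp
  finally show ?thesis .
qed

lemma funpow_mat_vec_pos:
  assumes pow_pos: "\<forall>i<m. \<forall>j<m. mat_pow m A k i j > 0"
    and u: "\<forall>j<m. u j \<ge> 0" "j0 < m" "u j0 > 0" and "i < m"
  shows "(mat_vec m A ^^ k) u i > 0"
proof -
  have "\<forall>j<m. mat_pow m A k i j * u j \<ge> 0"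
    using pow_pos u \<open>i < m\<close> by (simp add: less_imp_le)
  with assms show ?thesis
    by (auto simp: funpow_mat_vec mat_vec_def intro!: sum_pos2[of _ j0])
qed

lemma diffusion_small_seed_if_subinvariant:
  assumes "primitive m A"
    and u_nonneg: "\<forall>i<m. u i \<ge> 0" and u_le: "\<forall>i<m. u i \<le> mat_vec m A u i"
    and u_less: "\<forall>i<m. u i > 0 \<longrightarrow> u i < mat_vec m A u i"
    and "j0 < m" "u j0 > 0"
  shows "diffusion_small_seed m A"
proof -
  have A: "nonneg_mat m A"
    using \<open>primitive m A\<close> by (simp add: primitive_def nonneg_mat_def)
  obtain k where pow_pos: "\<forall>i<m. \<forall>j<m. mat_pow m A k i j > 0"
    using \<open>primitive m A\<close> unfolding primitive_def by blast
  define F where "F = mat_vec m A"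
  have mono: "(F ^^ n) u i \<le> (F ^^ n') u i" if "i < m" "n \<le> n'" for i n n'
    using mat_vec_iterates_mono[OF A] u_le that unfolding F_def by blast
  have nonneg: "(F ^^ n) u i \<ge> 0" if "i < m" for n i
    using mono[OF that, of 0 n] u_nonneg that by (fastforce intro: order.trans)
  have Fk_pos: "(F ^^ k) u i > 0" if "i < m" for i
    using funpow_mat_vec_pos[OF pow_pos] u_nonneg assms(5,6) that unfolding F_def by blast
  define v where "v = (\<lambda>i. \<Sum>n<Suc k. (F ^^ n) u i)"
  show ?thesis
  proof (rule diffusion_small_seedI, intro allI impI conjI)
    fix i
    assume i: "i < m"
    have "(F ^^ k) u i \<le> v i"
      unfolding v_def by (rule member_le_sum) (use nonneg i in auto)
    then show "0 < v i"
      using Fk_pos[OF i] by simp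
    have "u i < (F ^^ Suc k) u i"
    proof (cases "u i > 0")
      case True
      then show ?thesis using u_less i mono[OF i, of 1 "Suc k"] by (fastforce simp: F_def)
    next
      case False
      then show ?thesis using Fk_pos[OF i] mono[OF i, of k "Suc k"] by simp
    qed
    moreover have "mat_vec m A v i - v i = (F ^^ Suc k) u i - u i"
      unfolding v_def F_def by (rule mat_vec_sum_iterates_telescope)
    ultimately show "v i < mat_vec m A v i"
      by linarith
  qed
qed

lemma diffusion_small_seed_if_subset:
  assumes "primitive m A"
    and "S \<noteq> {}" "S \<subseteq> {..<m}" and row_sums: "\<forall>i\<in>S. (\<Sum>j\<in>S. A i j) > 1"
  shows "diffusion_small_seed m A"
proof -
  define u where "u = (\<lambda>j. if j \<in> S then 1 else 0 :: real)"
  have Au: "mat_vec m A u i = (\<Sum>j\<in>S. A i j)" for i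
  proof -
    have "mat_vec m A u i = (\<Sum>j\<in>{..<m} \<inter> S. A i j)"
      unfolding mat_vec_def u_def sum.inter_restrict[OF finite_lessThan] by (rule sum.cong) auto
    with \<open>S \<subseteq> {..<m}\<close> show ?thesis
      by (simp add: Int_absorb1)
  qed
  have "0 \<le> (\<Sum>j\<in>S. A i j)" if "i < m" for i
    using \<open>primitive m A\<close> that \<open>S \<subseteq> {..<m}\<close> by (auto simp: primitive_def intro!: sum_nonneg)
  then have "\<forall>i<m. u i \<le> mat_vec m A u i" "\<forall>i<m. u i > 0 \<longrightarrow> u i < mat_vec m A u i"
    unfolding Au using row_sums by (auto simp: u_def less_imp_le)
  moreover obtain j0 where "j0 \<in> S"
    using \<open>S \<noteq> {}\<close> by blast
  ultimately show ?thesis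
    using diffusion_small_seed_if_subinvariant[OF \<open>primitive m A\<close>, of u j0] \<open>S \<subseteq> {..<m}\<close>
    by (auto simp: u_def)
qed

lemma not_diffusion_small_seed_if_row_sums_le_1:
  assumes "m \<ge> 1" and A: "nonneg_mat m A" and row_sums: "\<forall>i<m. (\<Sum>j<m. A i j) \<le> 1"
  shows "\<not> diffusion_small_seed m A"
proof
  assume "diffusion_small_seed m A"
  then obtain v where v: "\<forall>i<m. 0 < v i \<and> (\<Sum>j<m. A i j * v j) > v i"
    unfolding diffusion_small_seed_def using zero_less_one by blast
  have "Max (v ` {..<m}) \<in> v ` {..<m}"
    using \<open>m \<ge> 1\<close> by (intro Max_in) (auto simp: lessThan_empty_iff)
  then obtain i0 where i0: "i0 < m" "v i0 = Max (v ` {..<m})"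
    by auto
  have "(\<Sum>j<m. A i0 j * v j) \<le> (\<Sum>j<m. A i0 j * v i0)"
    using A i0 by (intro sum_mono mult_left_mono) (auto simp: nonneg_mat_def)
  also have "\<dots> \<le> v i0"
    using row_sums i0(1) v mult_right_mono[of "\<Sum>j<m. A i0 j" 1 "v i0"]
    by (simp add: sum_distrib_right[symmetric] less_imp_le)
  finally show False
    using v i0(1) by fastforce
qed

lemma row_stochastic_weighted_sum_gt_1:
  assumes stoch: "row_stochastic m M" and "i < m" and x: "\<forall>j<m. x j > 1"
  shows "(\<Sum>j<m. M i j * x j) > 1"
proof -
  have nonneg: "\<forall>j<m. M i j \<ge> 0" and sum1: "(\<Sum>j<m. M i j) = 1"
    using stoch \<open>i < m\<close> by (auto simp: row_stochastic_def)
  then obtain j where j: "j < m" "M i j > 0"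
    by (metis lessThan_iff less_eq_real_def sum.neutral zero_neq_one)
  have "(\<Sum>j<m. M i j) < (\<Sum>j<m. M i j * x j)"
  proof (rule sum_strict_mono_ex1)
    show "\<forall>l\<in>{..<m}. M i l \<le> M i l * x l"
      using nonneg x by (metis lessThan_iff less_imp_le mult.right_neutral mult_left_mono)
    show "\<exists>l\<in>{..<m}. M i l < M i l * x l"
      using j x by (intro bexI[of _ j]) auto
  qed simp
  with sum1 show ?thesis by simp
qed

lemma row_stochastic_weighted_sum_le_1:
  assumes stoch: "row_stochastic m M" and "i < m" and x: "\<forall>j<m. x j \<le> 1"
  shows "(\<Sum>j<m. M i j * x j) \<le> 1"
proof -
  have "(\<Sum>j<m. M i j * x j) \<le> (\<Sum>j<m. M i j)"
    using stoch x \<open>i < m\<close> unfolding row_stochastic_def by (intro sum_mono) (simp add: mult_left_le)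
  with stoch \<open>i < m\<close> show ?thesis
    by (simp add: row_stochastic_def)
qed

lemma x_term_nonneg:
  assumes "degree_distribution p" "\<forall>d. w d > 0" "rate_conditions p f g"
  shows "x_term p w f g d \<ge> 0"
proof (cases "d = 0")
  case False
  then have "f d 0 \<le> f d 1"
    using assms(3) unfolding rate_conditions_def by (metis One_nat_def le0 less_one not_le)
  then show ?thesis
    using assms unfolding x_term_def degree_distribution_def rate_conditions_def
    by (intro divide_nonneg_pos mult_nonneg_nonneg) (auto simp: less_imp_le)
qed (simp add: x_term_def)

lemma xval_pos:
  assumes "degree_distribution p" "\<forall>d. w d > 0" "rate_conditions p f g"
    and "summable (x_term p w f g)"
  shows "xval p w f g > 0"
proof -
  obtain d where d: "1 \<le> d" "p d > 0" "f d 1 > 0"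
    using assms(3) unfolding rate_conditions_def by blast
  then have "x_term p w f g d > 0"
    using assms(2,3) unfolding x_term_def rate_conditions_def by (intro divide_pos_pos mult_pos_pos) auto
  then show ?thesis
    unfolding xval_def using suminf_pos2 x_term_nonneg[OF assms(1-3)] assms(4) by blast
qed

theorem corollary3:
  fixes m :: nat
    and Pm :: "nat \<Rightarrow> nat \<Rightarrow> real"
    and P :: "nat \<Rightarrow> nat \<Rightarrow> real"
    and w :: "nat \<Rightarrow> nat \<Rightarrow> real"
    and f g :: "nat \<Rightarrow> nat \<Rightarrow> nat \<Rightarrow> real"
  assumes m_pos: "m \<ge> 1"
    and stoch: "row_stochastic m Pm"
    and prim: "primitive m Pm"
    and degdist: "\<forall>i<m. degree_distribution (P i)"
    and wpos: "\<forall>i<m. \<forall>d. w i d > 0"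
    and rates: "\<forall>i<m. rate_conditions (P i) (f i) (g i)"
    and xfin: "\<forall>i<m. summable (x_term (P i) (w i) (f i) (g i))"
  defines "x \<equiv> (\<lambda>i. xval (P i) (w i) (f i) (g i))"
    and "A \<equiv> (\<lambda>i j. Pm i j * xval (P j) (w j) (f j) (g j))"
  shows "((\<forall>i<m. x i > 1) \<longrightarrow> diffusion_small_seed m A)
       \<and> ((\<forall>i<m. x i \<le> 1) \<longrightarrow> \<not> diffusion_small_seed m A)
       \<and> ((\<exists>i<m. Pm i i * x i > 1) \<longrightarrow> diffusion_small_seed m A)
       \<and> ((\<exists>S. S \<noteq> {} \<and> S \<subseteq> {..<m} \<and> (\<forall>i\<in>S. (\<Sum>j\<in>S. Pm i j * x j) > 1))
            \<longrightarrow> diffusion_small_seed m A)"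
proof -
  have x_pos: "\<forall>j<m. x j > 0"
    using xval_pos degdist wpos rates xfin by (simp add: x_def)
  have A_eq: "A = (\<lambda>i j. Pm i j * x j)"
    by (simp add: A_def x_def)
  have prim_A: "primitive m A"
    unfolding A_eq using primitive_scale_columns[OF prim x_pos] .
  then have "nonneg_mat m A"
    by (simp add: primitive_def nonneg_mat_def)
  note subset_case = diffusion_small_seed_if_subset[OF prim_A]
  have "(\<forall>i<m. x i > 1) \<longrightarrow> diffusion_small_seed m A"
    using subset_case[of "{..<m}"] row_stochastic_weighted_sum_gt_1[OF stoch] m_pos
    by (auto simp: A_eq lessThan_empty_iff)
  moreover have "(\<forall>i<m. x i \<le> 1) \<longrightarrow> \<not> diffusion_small_seed m A"
    using not_diffusion_small_seed_if_row_sums_le_1[OF m_pos \<open>nonneg_mat m A\<close>]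
      row_stochastic_weighted_sum_le_1[OF stoch] by (auto simp: A_eq)
  moreover have "(\<exists>i<m. Pm i i * x i > 1) \<longrightarrow> diffusion_small_seed m A"
    using subset_case[of "{_}"] by (auto simp: A_eq)
  moreover have "(\<exists>S. S \<noteq> {} \<and> S \<subseteq> {..<m} \<and> (\<forall>i\<in>S. (\<Sum>j\<in>S. Pm i j * x j) > 1))
      \<longrightarrow> diffusion_small_seed m A"
    using subset_case by (auto simp: A_eq)
  ultimately show ?thesis
    by blast
qed

end
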